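(* Let $N$ be a natural number, $P=\{a\subseteq N: |a|\geq 2\}$, and let $\|\cdot\|_3$ be the graph coloring norm on subsets of $P$ (defined in the context). Let $g:P\to P$ be a polygon-reducing function and let $\psi_g$ be as defined in the context. Then for every $A\subseteq P$, $\|A\|_3\leq \|\psi_g(A)\|_3$.
   Context: $N=\{0,\ldots,N-1\}$. For $A\subseteq P$ and $z\subseteq N$ let $A\restriction z=\{a\in A: a\subseteq z\}$. The relation "$\|A\|_3\geq m$" is defined recursively: $\|A\|_3\geq 0$ always; $\|A\|_3\geq 1$ iff $A\neq\emptyset$; for $m\geq 1$, $\|A\|_3\geq m+1$ iff for every $z\subseteq N$ either $\|A\restriction z\|_3\geq m$ or $\|A\restriction(N\setminus z)\|_3\geq m$. Then $\|A\|_3$ is the largest $m$ with $\|A\|_3\geq m$. Define $f:\mathcal P(N)\to\omega$ by $f(a)=a_0N^0+a_1N^1+\cdots+a_kN^k$ where $a=\{a_0<a_1<\cdots<a_k\}$. A function $g:P\to P$ is polygon-reducing if $g(a)\subseteq a$ for all $a\in P$, and $g(a)=a$ iff $|a|=2$. For such $g$, $\psi_g:\mathcal P(P)\to\mathcal P(P)$ is given by $\psi_g(\emptyset)=\emptyset$ and, for non-empty $A\subseteq P$, $\psi_g(A)=(A\setminus\{a\})\cup\{g(a)\}$ where $a\in A$ satisfies $f(a)=\max\{f(a'):a'\in A\}$. *)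

theory Defs
  imports Main
begin

text \<open>The ground set N = {0,...,N-1} is represented as {..<N}.\<close>

definition polys :: "nat \<Rightarrow> nat set set" where
  "polys N = {a. a \<subseteq> {..<N} \<and> card a \<ge> 2}"

definition restr :: "nat set set \<Rightarrow> nat set \<Rightarrow> nat set set" where
  "restr A z = {a \<in> A. a \<subseteq> z}"

text \<open>norm_ge N A m  means  ||A||_3 >= m.\<close>
fun norm_ge :: "nat \<Rightarrow> nat set set \<Rightarrow> nat \<Rightarrow> bool" where
  "norm_ge N A 0 = True"
| "norm_ge N A (Suc 0) = (A \<noteq> {})"
| "norm_ge N A (Suc (Suc m)) =
     (\<forall>z. z \<subseteq> {..<N} \<longrightarrow>
        norm_ge N (restr A z) (Suc m) \<or> norm_ge N (restr A ({..<N} - z)) (Suc m))"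

definition norm3 :: "nat \<Rightarrow> nat set set \<Rightarrow> nat" where
  "norm3 N A = (GREATEST m. norm_ge N A m)"

definition fcode :: "nat \<Rightarrow> nat set \<Rightarrow> nat" where
  "fcode N a = (\<Sum>i<card a. sorted_list_of_set a ! i * N ^ i)"

definition polygon_reducing :: "nat \<Rightarrow> (nat set \<Rightarrow> nat set) \<Rightarrow> bool" where
  "polygon_reducing N g \<longleftrightarrow>
     (\<forall>a \<in> polys N. g a \<in> polys N \<and> g a \<subseteq> a \<and> (g a = a \<longleftrightarrow> card a = 2))"

definition psi :: "nat \<Rightarrow> (nat set \<Rightarrow> nat set) \<Rightarrow> nat set set \<Rightarrow> nat set set" where
  "psi N g A = (if A = {} then {} else
     (let a = (SOME a. a \<in> A \<and> fcode N a = Max (fcode N ` A)) in (A - {a}) \<union> {g a}))"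

end

theory Submission
  imports Defs
begin

text \<open>\<open>psi N g\<close> replaces one polygon a of A by g(a) \<subseteq> a (which one is irrelevant), so every
  member of A contains a member of \<open>psi N g A\<close>. The relation \<open>norm_ge N _ m\<close> is monotone along
  this refinement, because restricting both families to any z preserves it. To pass from
  \<open>norm_ge\<close> to the greatest such m one needs a bound: since polygons have at least two
  vertices, splitting along a singleton {x} removes x from every polygon that survives, so
  \<open>norm_ge N A m\<close> fails as soon as m exceeds the number of vertices in use, in particular for m > N.\<close>

lemma restr_empty [simp]: "restr {} z = {}"
  by (simp add: restr_def)

lemma not_norm_ge_empty: "\<not> norm_ge N {} (Suc m)"
  by (induction m) auto

lemma restr_below:
  assumes "\<forall>a\<in>A. \<exists>b\<in>B. b \<subseteq> a"
  shows "\<forall>a\<in>restr A z. \<exists>b\<in>restr B z. b \<subseteq> a"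
  using assms by (fastforce simp: restr_def)

lemma norm_ge_mono_below:
  assumes "norm_ge N A m" and "\<forall>a\<in>A. \<exists>b\<in>B. b \<subseteq> a"
  shows "norm_ge N B m"
  using assms
proof (induction N A m arbitrary: B rule: norm_ge.induct)
  case (1 N A)
  then show ?case by simp
next
  case (2 N A)
  then show ?case by auto
next
  case (3 N A m)
  have "norm_ge N (restr B z) (Suc m) \<or> norm_ge N (restr B ({..<N} - z)) (Suc m)"
    if z: "z \<subseteq> {..<N}" for z
  proof -
    have z': "{..<N} - z \<subseteq> {..<N}" by blast
    from "3.prems"(1) z
    have "norm_ge N (restr A z) (Suc m) \<or> norm_ge N (restr A ({..<N} - z)) (Suc m)"
      by simp
    then show ?thesis
      using "3.IH"[OF z _ restr_below[OF "3.prems"(2)]] "3.IH"[OF z' _ restr_below[OF "3.prems"(2)]]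
      by blast
  qed
  then show ?case by simp
qed

lemma not_norm_ge_above_card:
  assumes "finite S" and "S \<subseteq> {..<N}" and "\<forall>a\<in>A. 2 \<le> card a \<and> a \<subseteq> S" and "card S < m"
  shows "\<not> norm_ge N A m"
  using assms
proof (induction S arbitrary: A m rule: finite_induct)
  case empty
  then have "A = {}" by (metis card.empty subset_empty not_numeral_le_zero equals0I)
  moreover obtain k where "m = Suc k" using \<open>card {} < m\<close> gr0_conv_Suc by auto
  ultimately show ?case using not_norm_ge_empty by simp
next
  case (insert x S)
  then have "Suc (card S) < m" by simp
  define k where "k = m - 2"
  with \<open>Suc (card S) < m\<close> have m: "m = Suc (Suc k)" and k: "card S < Suc k" by auto
  have halves: "\<not> norm_ge N (restr A z) (Suc k)" if z: "z = {x} \<or> z = {..<N} - {x}" for z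
  proof (rule insert.IH)
    show "S \<subseteq> {..<N}" using insert.prems(1) by simp
    show "card S < Suc k" by (fact k)
    show "\<forall>a\<in>restr A z. 2 \<le> card a \<and> a \<subseteq> S"
    proof
      fix a assume "a \<in> restr A z"
      then have a: "2 \<le> card a" "a \<subseteq> insert x S" "a \<subseteq> z"
        using insert.prems(2) by (auto simp: restr_def)
      have "a \<noteq> {x}" and "a \<noteq> {}" using a(1) by auto
      then have "z \<noteq> {x}" using a(3) by (auto simp: subset_singleton_iff)
      then have "x \<notin> a" using z a(3) by blast
      then show "2 \<le> card a \<and> a \<subseteq> S" using a(1,2) by blast
    qed
  qed
  then have "\<not> (norm_ge N (restr A {x}) (Suc k) \<or> norm_ge N (restr A ({..<N} - {x})) (Suc k))"
    by blast
  moreover have "{x} \<subseteq> {..<N}" using insert.prems(1) by blast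
  ultimately show ?case unfolding m norm_ge.simps(3) by blast
qed

lemma norm_ge_polys_le:
  assumes "A \<subseteq> polys N" and "norm_ge N A m"
  shows "m \<le> N"
proof (rule ccontr)
  assume "\<not> m \<le> N"
  moreover have "\<forall>a\<in>A. 2 \<le> card a \<and> a \<subseteq> {..<N}"
    using assms(1) by (auto simp: polys_def)
  ultimately have "\<not> norm_ge N A m"
    using not_norm_ge_above_card[of "{..<N}" N A m] by simp
  with assms(2) show False by contradiction
qed

lemma norm_ge_norm3:
  assumes "A \<subseteq> polys N"
  shows "norm_ge N A (norm3 N A)"
  unfolding norm3_def
  by (rule GreatestI_nat[of _ 0 N]) (auto intro: norm_ge_polys_le[OF assms])

lemma norm_ge_le_norm3:
  assumes "A \<subseteq> polys N" and "norm_ge N A m"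
  shows "m \<le> norm3 N A"
  unfolding norm3_def
  by (rule Greatest_le_nat[of _ m N]) (auto intro: assms(2) norm_ge_polys_le[OF assms(1)])

lemma norm3_mono_below:
  assumes "A \<subseteq> polys N" and "B \<subseteq> polys N" and "\<forall>a\<in>A. \<exists>b\<in>B. b \<subseteq> a"
  shows "norm3 N A \<le> norm3 N B"
  using norm_ge_le_norm3[OF assms(2) norm_ge_mono_below[OF norm_ge_norm3[OF assms(1)] assms(3)]] .

lemma finite_polys: "finite (polys N)"
  by (rule finite_subset[of _ "Pow {..<N}"]) (auto simp: polys_def)

lemma psi_replaces_member:
  assumes "finite A" and "A \<noteq> {}"
  obtains a where "a \<in> A" and "psi N g A = insert (g a) (A - {a})"
proof -
  let ?a = "SOME a. a \<in> A \<and> fcode N a = Max (fcode N ` A)"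
  have "Max (fcode N ` A) \<in> fcode N ` A" using assms by simp
  then have "\<exists>a. a \<in> A \<and> fcode N a = Max (fcode N ` A)" by auto
  then have "?a \<in> A" by (rule someI_ex[THEN conjunct1])
  moreover have "psi N g A = insert (g ?a) (A - {?a})"
    using assms(2) by (simp add: psi_def)
  ultimately show ?thesis by (rule that)
qed

theorem theorem5p22:
  fixes N :: nat and g :: "nat set \<Rightarrow> nat set" and A :: "nat set set"
  assumes "polygon_reducing N g"
    and "A \<subseteq> polys N"
  shows "norm3 N A \<le> norm3 N (psi N g A)"
proof (cases "A = {}")
  case True
  then show ?thesis by (simp add: psi_def)
next
  case False
  moreover have "finite A" using assms(2) finite_polys by (rule finite_subset)
  ultimately obtain a where a: "a \<in> A" and psi: "psi N g A = insert (g a) (A - {a})"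
    using psi_replaces_member by blast
  have "g a \<in> polys N" and "g a \<subseteq> a"
    using assms a by (auto simp: polygon_reducing_def)
  with assms(2) have "psi N g A \<subseteq> polys N" and "\<forall>b\<in>A. \<exists>c\<in>psi N g A. c \<subseteq> b"
    unfolding psi by blast+
  with assms(2) show ?thesis by (rule norm3_mono_below)
qed

end
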